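(* Assume $\rho_{i,j}\ge 0$ for all cells, and consider the forward Euler finite-volume update of the intensity \[ \rho^{+}_{i,j} =\rho_{i,j} -\Delta z\left( \frac{F^x_{i+\frac12,j}-F^x_{i-\frac12,j}}{\Delta x} +\frac{F^y_{i,j+\frac12}-F^y_{i,j-\frac12}}{\Delta y} \right), \] with boundary face fluxes set to zero, $F^x_{\frac12,j}=F^x_{N_x+\frac12,j}=0$, $F^y_{i,\frac12}=F^y_{i,N_y+\frac12}=0$, where the interior fluxes are Rusanov (local Lax--Friedrichs) fluxes \[ F^x_{i+\frac12,j} = \tfrac12\big(\rho_{i,j}+\rho_{i+1,j}\big)\left(v^x_{i+\frac12,j} + \omega^x_{i+\frac12,j} \right) -\tfrac12 \left( a^x_{i+\frac12,j} + b^x_{i+\frac12,j} \right)\big(\rho_{i+1,j}-\rho_{i,j}\big), \] (and $F^y_{i,j+\frac12}$ defined analogously in the $y$-direction) with wave-speed parameters chosen as $ a^x_{i+\frac12,j} := |v^x_{i+\frac12,j}|,\ a^y_{i,j+\frac12} := |v^y_{i,j+\frac12}|, $ and polarization gradient parameters $ b^x_{i+\frac12,j} := |\omega^x_{i+\frac12,j}|,\ b^y_{i,j+\frac12} := |\omega^y_{i,j+\frac12}|. $ If the $z$-step satisfies the global CFL condition \[ \Delta z\left( \frac{\max_{i,j} c^x_{i+\frac12,j}}{\Delta x} + \frac{\max_{i,j} c^y_{i,j+\frac12}}{\Delta y} \right)\le \frac{1}{2}, \] where $c^x_{i+\frac12,j} = a^x_{i+\frac12,j}+b^x_{i+\frac12,j}$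 and $c^y_{i,j+\frac12} = a^y_{i,j+\frac12}+b^y_{i,j+\frac12}$, then the forward Euler update yields $\rho^{+}_{i,j}\ge 0$ for all cells. Consequently, the third-order SSP Runge--Kutta scheme (SSP-RK3) preserves nonnegativity under the same CFL condition.
   Context: Discretization of the intensity equation $\partial_z \rho + \frac{1}{k_0}\nabla\cdot(\rho(\nabla\phi+\nabla\gamma))=0$ on a uniform Cartesian grid of $\Omega=(-L,L)^2$ with cell centers $x_i=-L+(i-\tfrac12)\Delta x$, $y_j=-L+(j-\tfrac12)\Delta y$, $i=1,\dots,N_x$, $j=1,\dots,N_y$, $\Delta x=2L/N_x$, $\Delta y=2L/N_y$; $k_0>0$ is the wavenumber. Cell-centered velocities and polarization gradients are $v^x_{i,j}=\frac1{k_0}(D_x^0\phi)_{i,j}$, $\omega^x_{i,j}=\frac1{k_0}(D_x^0\gamma)_{i,j}$ (centered differences with Neumann ghost-cell reflection), and face values are arithmetic averages $v^x_{i+\frac12,j}=\tfrac12(v^x_{i,j}+v^x_{i+1,j})$, $\omega^x_{i+\frac12,j}=\tfrac12(\omega^x_{i,j}+\omega^x_{i+1,j})$, analogously in $y$. SSP-RK3 for $U'=\mathcal R(U)$ is $U^{(1)}=U^n+\Delta z\mathcal R(U^n)$, $U^{(2)}=\tfrac34U^n+\tfrac14(U^{(1)}+\Delta z\mathcal R(U^{(1)}))$, $U^{n+1}=\tfrac13U^n+\tfrac23(U^{(2)}+\Delta z\mathcal R(U^{(2)}))$, i.e. a convex combination of forward Euler steps. *)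

theory Defs
  imports Complex_Main
begin

text \<open>Cells are indexed by i = 1..Nx, j = 1..Ny. A face index i stands for the
face i+1/2 (i = 0..Nx), and similarly in y. Grid functions are nat => nat => real;
only values on cells are relevant.\<close>

definition dx :: "real \<Rightarrow> nat \<Rightarrow> real" where
  "dx L N = 2 * L / real N"

text \<open>Neumann ghost-cell reflection: f_0 = f_1, f_{N+1} = f_N.\<close>
definition reflect :: "nat \<Rightarrow> (nat \<Rightarrow> real) \<Rightarrow> nat \<Rightarrow> real" where
  "reflect N f i = (if i = 0 then f 1 else if i = N + 1 then f N else f i)"

definition D0 :: "real \<Rightarrow> nat \<Rightarrow> (nat \<Rightarrow> real) \<Rightarrow> nat \<Rightarrow> real" where
  "D0 h N f i = (reflect N f (i + 1) - reflect N f (i - 1)) / (2 * h)"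

text \<open>Cell-centered quantities (1/k0) D^0_x psi and (1/k0) D^0_y psi
 (psi = phi gives v, psi = gamma gives omega).\<close>
definition cellx :: "real \<Rightarrow> real \<Rightarrow> nat \<Rightarrow> (nat \<Rightarrow> nat \<Rightarrow> real) \<Rightarrow> nat \<Rightarrow> nat \<Rightarrow> real" where
  "cellx k0 L Nx psi i j = (1 / k0) * D0 (dx L Nx) Nx (\<lambda>i'. psi i' j) i"

definition celly :: "real \<Rightarrow> real \<Rightarrow> nat \<Rightarrow> (nat \<Rightarrow> nat \<Rightarrow> real) \<Rightarrow> nat \<Rightarrow> nat \<Rightarrow> real" where
  "celly k0 L Ny psi i j = (1 / k0) * D0 (dx L Ny) Ny (\<lambda>j'. psi i j') j"

definition facex :: "real \<Rightarrow> real \<Rightarrow> nat \<Rightarrow> (nat \<Rightarrow> nat \<Rightarrow> real) \<Rightarrow> nat \<Rightarrow> nat \<Rightarrow> real" where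
  "facex k0 L Nx psi i j = (cellx k0 L Nx psi i j + cellx k0 L Nx psi (i + 1) j) / 2"

definition facey :: "real \<Rightarrow> real \<Rightarrow> nat \<Rightarrow> (nat \<Rightarrow> nat \<Rightarrow> real) \<Rightarrow> nat \<Rightarrow> nat \<Rightarrow> real" where
  "facey k0 L Ny psi i j = (celly k0 L Ny psi i j + celly k0 L Ny psi i (j + 1)) / 2"

definition rusanov :: "real \<Rightarrow> real \<Rightarrow> real \<Rightarrow> real \<Rightarrow> real" where
  "rusanov rl rr v w = (rl + rr) / 2 * (v + w) - (\<bar>v\<bar> + \<bar>w\<bar>) / 2 * (rr - rl)"

definition fluxx :: "real \<Rightarrow> real \<Rightarrow> nat \<Rightarrow> (nat \<Rightarrow> nat \<Rightarrow> real) \<Rightarrow> (nat \<Rightarrow> nat \<Rightarrow> real)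
    \<Rightarrow> (nat \<Rightarrow> nat \<Rightarrow> real) \<Rightarrow> nat \<Rightarrow> nat \<Rightarrow> real" where
  "fluxx k0 L Nx phi gam rho i j =
     (if 1 \<le> i \<and> i < Nx
      then rusanov (rho i j) (rho (i + 1) j) (facex k0 L Nx phi i j) (facex k0 L Nx gam i j)
      else 0)"

definition fluxy :: "real \<Rightarrow> real \<Rightarrow> nat \<Rightarrow> (nat \<Rightarrow> nat \<Rightarrow> real) \<Rightarrow> (nat \<Rightarrow> nat \<Rightarrow> real)
    \<Rightarrow> (nat \<Rightarrow> nat \<Rightarrow> real) \<Rightarrow> nat \<Rightarrow> nat \<Rightarrow> real" where
  "fluxy k0 L Ny phi gam rho i j =
     (if 1 \<le> j \<and> j < Ny
      then rusanov (rho i j) (rho i (j + 1)) (facey k0 L Ny phi i j) (facey k0 L Ny gam i j)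
      else 0)"

definition resid :: "real \<Rightarrow> real \<Rightarrow> nat \<Rightarrow> nat \<Rightarrow> (nat \<Rightarrow> nat \<Rightarrow> real) \<Rightarrow> (nat \<Rightarrow> nat \<Rightarrow> real)
    \<Rightarrow> (nat \<Rightarrow> nat \<Rightarrow> real) \<Rightarrow> nat \<Rightarrow> nat \<Rightarrow> real" where
  "resid k0 L Nx Ny phi gam rho i j =
     - ((fluxx k0 L Nx phi gam rho i j - fluxx k0 L Nx phi gam rho (i - 1) j) / dx L Nx
        + (fluxy k0 L Ny phi gam rho i j - fluxy k0 L Ny phi gam rho i (j - 1)) / dx L Ny)"

definition euler :: "real \<Rightarrow> real \<Rightarrow> real \<Rightarrow> nat \<Rightarrow> nat \<Rightarrow> (nat \<Rightarrow> nat \<Rightarrow> real) \<Rightarrow> (nat \<Rightarrow> nat \<Rightarrow> real)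
    \<Rightarrow> (nat \<Rightarrow> nat \<Rightarrow> real) \<Rightarrow> nat \<Rightarrow> nat \<Rightarrow> real" where
  "euler dz k0 L Nx Ny phi gam rho = (\<lambda>i j. rho i j + dz * resid k0 L Nx Ny phi gam rho i j)"

definition ssprk3 :: "real \<Rightarrow> real \<Rightarrow> real \<Rightarrow> nat \<Rightarrow> nat \<Rightarrow> (nat \<Rightarrow> nat \<Rightarrow> real) \<Rightarrow> (nat \<Rightarrow> nat \<Rightarrow> real)
    \<Rightarrow> (nat \<Rightarrow> nat \<Rightarrow> real) \<Rightarrow> nat \<Rightarrow> nat \<Rightarrow> real" where
  "ssprk3 dz k0 L Nx Ny phi gam U =
     (let E = euler dz k0 L Nx Ny phi gam;
          U1 = E U;
          U2 = (\<lambda>i j. 3/4 * U i j + 1/4 * E U1 i j)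
      in (\<lambda>i j. 1/3 * U i j + 2/3 * E U2 i j))"

text \<open>Maximal wave speeds over the interior faces (max with 0 only to handle the
 degenerate case of no interior faces; all c's are nonnegative).\<close>
definition cmaxx :: "real \<Rightarrow> real \<Rightarrow> nat \<Rightarrow> nat \<Rightarrow> (nat \<Rightarrow> nat \<Rightarrow> real) \<Rightarrow> (nat \<Rightarrow> nat \<Rightarrow> real) \<Rightarrow> real" where
  "cmaxx k0 L Nx Ny phi gam = Max (insert 0
     {\<bar>facex k0 L Nx phi i j\<bar> + \<bar>facex k0 L Nx gam i j\<bar> | i j. 1 \<le> i \<and> i < Nx \<and> 1 \<le> j \<and> j \<le> Ny})"

definition cmaxy :: "real \<Rightarrow> real \<Rightarrow> nat \<Rightarrow> nat \<Rightarrow> (nat \<Rightarrow> nat \<Rightarrow> real) \<Rightarrow> (nat \<Rightarrow> nat \<Rightarrow> real) \<Rightarrow> real" where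
  "cmaxy k0 L Nx Ny phi gam = Max (insert 0
     {\<bar>facey k0 L Ny phi i j\<bar> + \<bar>facey k0 L Ny gam i j\<bar> | i j. 1 \<le> i \<and> i \<le> Nx \<and> 1 \<le> j \<and> j < Ny})"

end

theory Submission
  imports Defs
begin

text \<open>The Rusanov flux is a combination \<open>\<rho>\<^sub>l \<alpha> + \<rho>\<^sub>r \<beta>\<close> with
  \<open>0 \<le> \<alpha> \<le> c\<close> and \<open>-c \<le> \<beta> \<le> 0\<close>, where \<open>c = |v| + |w|\<close> is the local wave speed.
  Hence, for nonnegative data, the flux leaving a cell through either face is at most
  \<open>c\<^sub>max\<close> times the cell's own value, so one forward Euler step loses at most the
  fraction \<open>2 \<Delta>z (c\<^sup>x\<^sub>max/\<Delta>x + c\<^sup>y\<^sub>max/\<Delta>y) \<le> 1\<close> of it. SSP-RK3 is a convex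
  combination of forward Euler steps and inherits the property.\<close>

definition nonneg_on_grid :: "nat \<Rightarrow> nat \<Rightarrow> (nat \<Rightarrow> nat \<Rightarrow> real) \<Rightarrow> bool" where
  "nonneg_on_grid Nx Ny U \<longleftrightarrow> (\<forall>i j. 1 \<le> i \<and> i \<le> Nx \<and> 1 \<le> j \<and> j \<le> Ny \<longrightarrow> U i j \<ge> 0)"

lemma rusanov_split:
  "rusanov rl rr v w
     = rl * ((v + w) + (\<bar>v\<bar> + \<bar>w\<bar>)) / 2 + rr * ((v + w) - (\<bar>v\<bar> + \<bar>w\<bar>)) / 2"
  by (simp add: rusanov_def field_simps)

lemma rusanov_le_left:
  assumes "rl \<ge> 0" "rr \<ge> 0" "\<bar>v\<bar> + \<bar>w\<bar> \<le> C"
  shows "rusanov rl rr v w \<le> rl * C"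
proof -
  have "rr * ((v + w) - (\<bar>v\<bar> + \<bar>w\<bar>)) \<le> 0"
    using assms(2) by (intro mult_nonneg_nonpos) auto
  moreover have "rl * ((v + w) + (\<bar>v\<bar> + \<bar>w\<bar>)) \<le> rl * (2 * C)"
    using assms(1,3) by (intro mult_left_mono) auto
  ultimately show ?thesis
    unfolding rusanov_split by linarith
qed

lemma rusanov_ge_right:
  assumes "rl \<ge> 0" "rr \<ge> 0" "\<bar>v\<bar> + \<bar>w\<bar> \<le> C"
  shows "rusanov rl rr v w \<ge> - rr * C"
proof -
  have "rl * ((v + w) + (\<bar>v\<bar> + \<bar>w\<bar>)) \<ge> 0"
    using assms(1) by (intro mult_nonneg_nonneg) auto
  moreover have "rr * ((v + w) - (\<bar>v\<bar> + \<bar>w\<bar>)) \<ge> rr * (- 2 * C)"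
    using assms(2,3) by (intro mult_left_mono) auto
  ultimately show ?thesis
    unfolding rusanov_split by linarith
qed

text \<open>Face \<open>k\<close> stands for \<open>k + 1/2\<close>. Both \<^const>\<open>fluxx\<close> and \<^const>\<open>fluxy\<close>
  are instances, with the other cell index frozen.\<close>

lemma rusanov_flux_jump_le:
  fixes F r v w :: "nat \<Rightarrow> real"
  assumes F: "\<And>k. F k = (if 1 \<le> k \<and> k < N then rusanov (r k) (r (k + 1)) (v k) (w k) else 0)"
    and r: "\<And>k. 1 \<le> k \<Longrightarrow> k \<le> N \<Longrightarrow> r k \<ge> 0"
    and C: "\<And>k. 1 \<le> k \<Longrightarrow> k < N \<Longrightarrow> \<bar>v k\<bar> + \<bar>w k\<bar> \<le> C" "C \<ge> 0"
    and k: "1 \<le> k" "k \<le> N"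
  shows "F k - F (k - 1) \<le> 2 * C * r k"
proof -
  have r_k: "r k \<ge> 0"
    using r k .
  have "F k \<le> r k * C"
  proof (cases "k < N")
    case True
    then show ?thesis
      using k by (simp add: F rusanov_le_left r C)
  next
    case False
    then show ?thesis
      using r_k C(2) by (simp add: F)
  qed
  moreover have "F (k - 1) \<ge> - r k * C"
  proof (cases "2 \<le> k")
    case True
    then have "rusanov (r (k - 1)) (r (k - 1 + 1)) (v (k - 1)) (w (k - 1)) \<ge> - r (k - 1 + 1) * C"
      using k by (intro rusanov_ge_right r C(1)) auto
    moreover have "1 \<le> k - 1 \<and> k - 1 < N"
      using True k by auto
    ultimately show ?thesis
      using True by (simp add: F)
  next
    case False
    then show ?thesis
      using r_k C(2) by (simp add: F)
  qed
  ultimately show ?thesis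
    by (simp add: algebra_simps)
qed

lemma finite_bounded_grid_image:
  fixes m n :: nat
  assumes "\<And>i j. P i j \<Longrightarrow> i \<le> m \<and> j \<le> n"
  shows "finite {f i j | i j. P i j}"
proof -
  have "{f i j | i j. P i j} \<subseteq> (\<lambda>(i, j). f i j) ` ({..m} \<times> {..n})"
    using assms by fastforce
  then show ?thesis
    by (rule finite_subset) auto
qed

lemma finite_cmaxx_set:
  "finite {\<bar>facex k0 L Nx phi i j\<bar> + \<bar>facex k0 L Nx gam i j\<bar> | i j. 1 \<le> i \<and> i < Nx \<and> 1 \<le> j \<and> j \<le> Ny}"
  by (rule finite_bounded_grid_image[where m = Nx and n = Ny]) auto

lemma finite_cmaxy_set:
  "finite {\<bar>facey k0 L Ny phi i j\<bar> + \<bar>facey k0 L Ny gam i j\<bar> | i j. 1 \<le> i \<and> i \<le> Nx \<and> 1 \<le> j \<and> j < Ny}"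
  by (rule finite_bounded_grid_image[where m = Nx and n = Ny]) auto

lemma cmaxx_nonneg: "cmaxx k0 L Nx Ny phi gam \<ge> 0"
  unfolding cmaxx_def using finite_cmaxx_set by (intro Max_ge) auto

lemma cmaxy_nonneg: "cmaxy k0 L Nx Ny phi gam \<ge> 0"
  unfolding cmaxy_def using finite_cmaxy_set by (intro Max_ge) auto

lemma cmaxx_ge:
  assumes "1 \<le> i" "i < Nx" "1 \<le> j" "j \<le> Ny"
  shows "\<bar>facex k0 L Nx phi i j\<bar> + \<bar>facex k0 L Nx gam i j\<bar> \<le> cmaxx k0 L Nx Ny phi gam"
  unfolding cmaxx_def using finite_cmaxx_set assms by (intro Max_ge) blast+

lemma cmaxy_ge:
  assumes "1 \<le> i" "i \<le> Nx" "1 \<le> j" "j < Ny"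
  shows "\<bar>facey k0 L Ny phi i j\<bar> + \<bar>facey k0 L Ny gam i j\<bar> \<le> cmaxy k0 L Nx Ny phi gam"
  unfolding cmaxy_def using finite_cmaxy_set assms by (intro Max_ge) blast+

lemma dx_pos: "L > 0 \<Longrightarrow> N \<ge> 1 \<Longrightarrow> dx L N > 0"
  by (simp add: dx_def)

lemma euler_ge_damped:
  assumes "L > 0" "Nx \<ge> 1" "Ny \<ge> 1" "dz \<ge> 0"
    and rho: "nonneg_on_grid Nx Ny rho"
    and ij: "1 \<le> i" "i \<le> Nx" "1 \<le> j" "j \<le> Ny"
  shows "euler dz k0 L Nx Ny phi gam rho i j
    \<ge> rho i j * (1 - 2 * (dz * (cmaxx k0 L Nx Ny phi gam / dx L Nx + cmaxy k0 L Nx Ny phi gam / dx L Ny)))"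
proof -
  define Cx where "Cx = cmaxx k0 L Nx Ny phi gam"
  define Cy where "Cy = cmaxy k0 L Nx Ny phi gam"
  have "fluxx k0 L Nx phi gam rho i j - fluxx k0 L Nx phi gam rho (i - 1) j \<le> 2 * Cx * rho i j"
    using rho ij unfolding Cx_def nonneg_on_grid_def
    by (intro rusanov_flux_jump_le[where F = "\<lambda>k. fluxx k0 L Nx phi gam rho k j"])
      (auto simp: fluxx_def cmaxx_ge cmaxx_nonneg)
  then have x: "(fluxx k0 L Nx phi gam rho i j - fluxx k0 L Nx phi gam rho (i - 1) j) / dx L Nx
      \<le> 2 * Cx * rho i j / dx L Nx"
    using dx_pos[OF assms(1,2)] by (intro divide_right_mono) auto
  have "fluxy k0 L Ny phi gam rho i j - fluxy k0 L Ny phi gam rho i (j - 1) \<le> 2 * Cy * rho i j"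
    using rho ij unfolding Cy_def nonneg_on_grid_def
    by (intro rusanov_flux_jump_le[where F = "\<lambda>k. fluxy k0 L Ny phi gam rho i k"])
      (auto simp: fluxy_def cmaxy_ge cmaxy_nonneg)
  then have y: "(fluxy k0 L Ny phi gam rho i j - fluxy k0 L Ny phi gam rho i (j - 1)) / dx L Ny
      \<le> 2 * Cy * rho i j / dx L Ny"
    using dx_pos[OF assms(1,3)] by (intro divide_right_mono) auto
  have "resid k0 L Nx Ny phi gam rho i j \<ge> - (2 * Cx * rho i j / dx L Nx + 2 * Cy * rho i j / dx L Ny)"
    unfolding resid_def using x y by linarith
  then have "dz * resid k0 L Nx Ny phi gam rho i j
      \<ge> dz * - (2 * Cx * rho i j / dx L Nx + 2 * Cy * rho i j / dx L Ny)"
    using assms(4) by (rule mult_left_mono)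
  then show ?thesis
    unfolding euler_def Cx_def [symmetric] Cy_def [symmetric] by (simp add: algebra_simps)
qed

lemma euler_preserves_nonneg_on_grid:
  assumes "L > 0" "Nx \<ge> 1" "Ny \<ge> 1" "dz \<ge> 0"
    and CFL: "dz * (cmaxx k0 L Nx Ny phi gam / dx L Nx + cmaxy k0 L Nx Ny phi gam / dx L Ny) \<le> 1 / 2"
    and rho: "nonneg_on_grid Nx Ny rho"
  shows "nonneg_on_grid Nx Ny (euler dz k0 L Nx Ny phi gam rho)"
  unfolding nonneg_on_grid_def
proof (intro allI impI)
  fix i j
  assume ij: "1 \<le> i \<and> i \<le> Nx \<and> 1 \<le> j \<and> j \<le> Ny"
  have "1 - 2 * (dz * (cmaxx k0 L Nx Ny phi gam / dx L Nx + cmaxy k0 L Nx Ny phi gam / dx L Ny)) \<ge> 0"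
    using CFL by linarith
  moreover have "rho i j \<ge> 0"
    using rho ij unfolding nonneg_on_grid_def by blast
  ultimately have "rho i j * (1 - 2 * (dz * (cmaxx k0 L Nx Ny phi gam / dx L Nx
      + cmaxy k0 L Nx Ny phi gam / dx L Ny))) \<ge> 0"
    by (rule mult_nonneg_nonneg[rotated])
  then show "euler dz k0 L Nx Ny phi gam rho i j \<ge> 0"
    using euler_ge_damped[OF assms(1-4) rho] ij by (meson order_trans)
qed

lemma nonneg_on_grid_conic_comb:
  assumes "a \<ge> 0" "b \<ge> 0" "nonneg_on_grid Nx Ny U" "nonneg_on_grid Nx Ny V"
  shows "nonneg_on_grid Nx Ny (\<lambda>i j. a * U i j + b * V i j)"
  using assms unfolding nonneg_on_grid_def by simp

lemma ssprk3_preserves_nonneg_on_grid: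
  assumes "\<And>U. nonneg_on_grid Nx Ny U \<Longrightarrow> nonneg_on_grid Nx Ny (euler dz k0 L Nx Ny phi gam U)"
    and "nonneg_on_grid Nx Ny U"
  shows "nonneg_on_grid Nx Ny (ssprk3 dz k0 L Nx Ny phi gam U)"
  unfolding ssprk3_def Let_def by (intro nonneg_on_grid_conic_comb assms) auto

theorem proposition4p3:
  fixes k0 L dz :: real and Nx Ny :: nat
    and phi gam rho :: "nat \<Rightarrow> nat \<Rightarrow> real"
  assumes "k0 > 0" and "L > 0" and "Nx \<ge> 1" and "Ny \<ge> 1" and "dz \<ge> 0"
    and nonneg: "\<And>i j. 1 \<le> i \<Longrightarrow> i \<le> Nx \<Longrightarrow> 1 \<le> j \<Longrightarrow> j \<le> Ny \<Longrightarrow> rho i j \<ge> 0"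
    and CFL: "dz * (cmaxx k0 L Nx Ny phi gam / dx L Nx + cmaxy k0 L Nx Ny phi gam / dx L Ny) \<le> 1 / 2"
  shows "(\<forall>i j. 1 \<le> i \<and> i \<le> Nx \<and> 1 \<le> j \<and> j \<le> Ny \<longrightarrow> euler dz k0 L Nx Ny phi gam rho i j \<ge> 0)
       \<and> (\<forall>i j. 1 \<le> i \<and> i \<le> Nx \<and> 1 \<le> j \<and> j \<le> Ny \<longrightarrow> ssprk3 dz k0 L Nx Ny phi gam rho i j \<ge> 0)"
proof -
  have rho: "nonneg_on_grid Nx Ny rho"
    using nonneg unfolding nonneg_on_grid_def by blast
  have euler: "nonneg_on_grid Nx Ny (euler dz k0 L Nx Ny phi gam U)" if "nonneg_on_grid Nx Ny U" for U
    using euler_preserves_nonneg_on_grid[OF assms(2-5) CFL that] .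
  have "nonneg_on_grid Nx Ny (euler dz k0 L Nx Ny phi gam rho)"
    by (rule euler[OF rho])
  moreover have "nonneg_on_grid Nx Ny (ssprk3 dz k0 L Nx Ny phi gam rho)"
    by (rule ssprk3_preserves_nonneg_on_grid[OF euler rho])
  ultimately show ?thesis
    unfolding nonneg_on_grid_def by blast
qed

end
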